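(* Let $1,2,3,4$ be four distinct vertices of $G$ such that $G[\{1,2,3\}]$ has edge set exactly $\{12,23\}$, $G[\{2,3,4\}]$ has edge set exactly $\{23,24,34\}$, and $w_{23}\ge w_{24}$ (nothing is assumed about whether $14$ is an edge). If $\Gamma_G$ is population monotonic, then $w_{23}\ge w_{12}+w_{34}$ and $w_{23}\ge w_{24}+w_{34}$.
   Context: $G=(V,E;w)$ is a finite simple graph with edge weights $w:E\to\mathbb{R}$, $w_e>0$ for all $e\in E$; $w_{ij}$ denotes the weight of edge $ij$. The matching game on $G$ is the cooperative game $\Gamma_G=(N,\gamma)$ with player set $N=V$ and, for $S\subseteq N$, $\gamma(S)$ equal to the maximum weight of a matching in the induced subgraph $G[S]$ (so $\gamma(\emptyset)=0$). A population monotonic allocation scheme (PMAS) is a family $(\boldsymbol{x}_S)_{\emptyset\neq S\subseteq N}$ with $\boldsymbol{x}_S=(x_{S,i})_{i\in S}\in\mathbb{R}^S$ such that (efficiency) $\sum_{i\in S}x_{S,i}=\gamma(S)$ for every nonempty $S\subseteq N$, and (monotonicity) $x_{S,i}\le x_{T,i}$ whenever $\emptyset\ne S\subseteq T\subseteq N$ and $i\in S$. $\Gamma_G$ is called population monotonic if it admits a PMAS. *)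

theory Defs
  imports Complex_Main "HOL-Library.Disjoint_Sets"
begin

definition simple_graph :: "'a set \<Rightarrow> 'a set set \<Rightarrow> bool" where
  "simple_graph V E \<longleftrightarrow> finite V \<and> (\<forall>e\<in>E. e \<subseteq> V \<and> card e = 2)"

definition matchings_in :: "'a set set \<Rightarrow> 'a set \<Rightarrow> 'a set set set" where
  "matchings_in E S = {M. M \<subseteq> E \<and> (\<forall>e\<in>M. e \<subseteq> S) \<and> disjoint M}"

definition gamma :: "'a set set \<Rightarrow> ('a set \<Rightarrow> real) \<Rightarrow> 'a set \<Rightarrow> real" where
  "gamma E w S = Max ((\<lambda>M. \<Sum>e\<in>M. w e) ` matchings_in E S)"

text \<open>Population monotonic allocation scheme: x S i is the payoff of player i
  in coalition S.\<close>
definition is_PMAS :: "'a set \<Rightarrow> 'a set set \<Rightarrow> ('a set \<Rightarrow> real) \<Rightarrow> ('a set \<Rightarrow> 'a \<Rightarrow> real) \<Rightarrow> bool" where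
  "is_PMAS V E w x \<longleftrightarrow>
     (\<forall>S. S \<subseteq> V \<and> S \<noteq> {} \<longrightarrow> (\<Sum>i\<in>S. x S i) = gamma E w S) \<and>
     (\<forall>S T i. S \<noteq> {} \<and> S \<subseteq> T \<and> T \<subseteq> V \<and> i \<in> S \<longrightarrow> x S i \<le> x T i)"

definition population_monotonic :: "'a set \<Rightarrow> 'a set set \<Rightarrow> ('a set \<Rightarrow> real) \<Rightarrow> bool" where
  "population_monotonic V E w \<longleftrightarrow> (\<exists>x. is_PMAS V E w x)"

end

theory Submission
  imports Defs
begin

text \<open>Monotonicity from the singleton coalitions, whose payoff is 0, makes every entry of a
  PMAS nonnegative. Let y be the allocation of the coalition {2,3}, so y(2) + y(3) = w(2,3).
  Comparing a path p-q-r inside a triple with its sub-coalitions {p,q} and {q,r} gives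
  w(p,q) + x({q,r}, r) \<le> \<gamma>({p,q,r}); applied to the paths 1-2-3, 4-3-2 and 4-2-3 this yields
  w(1,2) + y(3) \<le> \<gamma>(123), w(3,4) + y(2) \<le> \<gamma>(234) and w(2,4) + y(3) \<le> \<gamma>(234).
  A matching in a triple has at most one edge, so \<gamma>(123) \<le> max w(1,2) w(2,3) and, since
  w(2,4) \<le> w(2,3), \<gamma>(234) \<le> max w(2,3) w(3,4). Positivity of the weights forces both maxima
  to be w(2,3), and then the three inequalities combine to the claim.\<close>

lemma finite_matchings_in: "finite S \<Longrightarrow> finite (matchings_in E S)"
  unfolding matchings_in_def by (rule finite_subset[of _ "Pow (Pow S)"]) auto

lemma weight_le_gamma:
  assumes "finite S" "e \<in> E" "e \<subseteq> S"
  shows "w e \<le> gamma E w S"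
proof -
  have "{e} \<in> matchings_in E S"
    using assms unfolding matchings_in_def by auto
  then show ?thesis
    unfolding gamma_def using finite_matchings_in[OF \<open>finite S\<close>]
    by (intro Max_ge) (auto intro!: image_eqI[where x = "{e}"])
qed

lemma gamma_nonneg:
  assumes "finite S"
  shows "0 \<le> gamma E w S"
proof -
  have "{} \<in> matchings_in E S"
    unfolding matchings_in_def by auto
  then show ?thesis
    unfolding gamma_def using finite_matchings_in[OF assms]
    by (intro Max_ge) (auto intro!: image_eqI[where x = "{}"])
qed

lemma gamma_le_if_edges_intersect:
  assumes "finite S" "0 \<le> B"
    and weight_le: "\<And>e. e \<in> E \<Longrightarrow> e \<subseteq> S \<Longrightarrow> w e \<le> B"
    and intersect: "\<And>e f. e \<in> E \<Longrightarrow> f \<in> E \<Longrightarrow> e \<subseteq> S \<Longrightarrow> f \<subseteq> S \<Longrightarrow> e \<noteq> f \<Longrightarrow> e \<inter> f \<noteq> {}"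
  shows "gamma E w S \<le> B"
proof -
  have "(\<Sum>e\<in>M. w e) \<le> B" if M: "M \<in> matchings_in E S" for M
  proof (cases "M = {}")
    case False
    then obtain e where "e \<in> M" by auto
    have "M = {e}"
    proof (rule ccontr)
      assume "M \<noteq> {e}"
      then obtain f where "f \<in> M" "f \<noteq> e" using \<open>e \<in> M\<close> by auto
      moreover have "disjoint M"
        using M by (simp add: matchings_in_def)
      ultimately have "disjnt f e"
        using \<open>e \<in> M\<close> by (simp add: pairwise_def)
      moreover have "f \<inter> e \<noteq> {}"
        using M \<open>e \<in> M\<close> \<open>f \<in> M\<close> \<open>f \<noteq> e\<close> by (intro intersect) (auto simp: matchings_in_def)
      ultimately show False by (simp add: disjnt_def)
    qed
    with M \<open>e \<in> M\<close> show ?thesis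
      unfolding matchings_in_def by (auto intro: weight_le)
  qed (simp add: \<open>0 \<le> B\<close>)
  moreover have "{} \<in> matchings_in E S"
    unfolding matchings_in_def by auto
  ultimately show ?thesis
    unfolding gamma_def using finite_matchings_in[OF \<open>finite S\<close>] by (subst Max_le_iff) auto
qed

lemma two_subsets_of_card_le_3_intersect:
  assumes "finite S" "card S \<le> 3" "e \<subseteq> S" "f \<subseteq> S" "card e = 2" "card f = 2"
  shows "e \<inter> f \<noteq> {}"
proof
  assume "e \<inter> f = {}"
  with assms have "card (e \<union> f) = 4"
    by (subst card_Un_disjoint) (auto intro: finite_subset)
  moreover have "card (e \<union> f) \<le> card S"
    using assms by (intro card_mono) auto
  ultimately show False using assms by simp
qed

lemma card_2_subset_triple:
  assumes "card e = 2" "e \<subseteq> {p, q, r}"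
  shows "e = {p, q} \<or> e = {q, r} \<or> e = {p, r}"
  using assms by (auto simp: card_2_iff)

lemma gamma_triple_le:
  assumes G: "simple_graph V E" and "0 \<le> B"
    and "{p, q} \<in> E \<Longrightarrow> w {p, q} \<le> B" "{q, r} \<in> E \<Longrightarrow> w {q, r} \<le> B"
    and "{p, r} \<in> E \<Longrightarrow> w {p, r} \<le> B"
  shows "gamma E w {p, q, r} \<le> B"
proof (rule gamma_le_if_edges_intersect[OF _ \<open>0 \<le> B\<close>])
  have card_edge: "card e = 2" if "e \<in> E" for e
    using G that by (simp add: simple_graph_def)
  show "w e \<le> B" if "e \<in> E" "e \<subseteq> {p, q, r}" for e
    using card_2_subset_triple[OF card_edge that(2)] that(1) assms by blast
  have "card {p, q, r} \<le> 3"
    by (simp add: card_insert_if)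
  then show "e \<inter> f \<noteq> {}"
    if "e \<in> E" "f \<in> E" "e \<subseteq> {p, q, r}" "f \<subseteq> {p, q, r}" for e f
    using that card_edge by (intro two_subsets_of_card_le_3_intersect) auto
qed simp

lemma gamma_singleton:
  assumes "simple_graph V E"
  shows "gamma E w {u} = 0"
proof -
  have "e \<notin> E" if "e \<subseteq> {u}" for e
    using assms that card_mono[OF _ that] by (force simp: simple_graph_def)
  then have "gamma E w {u} \<le> 0"
    by (intro gamma_le_if_edges_intersect) auto
  with gamma_nonneg[of "{u}" E w] show ?thesis by simp
qed

lemma gamma_edge:
  assumes G: "simple_graph V E" and uv: "{u, v} \<in> E" and "0 \<le> w {u, v}"
  shows "gamma E w {u, v} = w {u, v}"
proof -
  have card_uv: "card {u, v} = 2"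
    using G uv by (simp add: simple_graph_def)
  have "e = {u, v}" if "e \<in> E" "e \<subseteq> {u, v}" for e
    using G that card_uv by (intro card_seteq) (auto simp: simple_graph_def)
  then have "gamma E w {u, v} \<le> w {u, v}"
    using \<open>0 \<le> w {u, v}\<close> by (intro gamma_le_if_edges_intersect) (auto simp: card_uv)
  moreover have "w {u, v} \<le> gamma E w {u, v}"
    using uv by (intro weight_le_gamma) auto
  ultimately show ?thesis by simp
qed

lemma PMAS_sum:
  "is_PMAS V E w x \<Longrightarrow> S \<subseteq> V \<Longrightarrow> S \<noteq> {} \<Longrightarrow> (\<Sum>i\<in>S. x S i) = gamma E w S"
  by (simp add: is_PMAS_def)

lemma PMAS_mono:
  "is_PMAS V E w x \<Longrightarrow> S \<subseteq> T \<Longrightarrow> T \<subseteq> V \<Longrightarrow> i \<in> S \<Longrightarrow> x S i \<le> x T i"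
  unfolding is_PMAS_def by blast

lemma PMAS_nonneg:
  assumes G: "simple_graph V E" and x: "is_PMAS V E w x" and "S \<subseteq> V" "i \<in> S"
  shows "0 \<le> x S i"
proof -
  have "x {i} i = 0"
    using PMAS_sum[OF x, of "{i}"] gamma_singleton[OF G] assms by auto
  moreover have "x {i} i \<le> x S i"
    using PMAS_mono[OF x] assms by simp
  ultimately show ?thesis by simp
qed

lemma PMAS_edge:
  assumes G: "simple_graph V E" and x: "is_PMAS V E w x"
    and "{u, v} \<subseteq> V" "u \<noteq> v" "{u, v} \<in> E" "0 \<le> w {u, v}"
  shows "x {u, v} u + x {u, v} v = w {u, v}"
  using PMAS_sum[OF x, of "{u, v}"] gamma_edge[OF G] assms by simp

lemma PMAS_path_le_gamma:
  assumes G: "simple_graph V E" and x: "is_PMAS V E w x"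
    and V: "p \<in> V" "q \<in> V" "r \<in> V" and "distinct [p, q, r]"
    and "{p, q} \<in> E" "0 \<le> w {p, q}"
  shows "w {p, q} + x {q, r} r \<le> gamma E w {p, q, r}"
proof -
  let ?T = "{p, q, r}"
  have mono: "x S i \<le> x ?T i" if "S \<subseteq> ?T" "i \<in> S" for S i
    using PMAS_mono[OF x that(1) _ that(2)] V by simp
  have "w {p, q} + x {q, r} r = x {p, q} p + x {p, q} q + x {q, r} r"
    using PMAS_edge[OF G x, of p q] assms by simp
  also have "\<dots> \<le> x ?T p + x ?T q + x ?T r"
    by (intro add_mono mono) auto
  also have "\<dots> = (\<Sum>i\<in>?T. x ?T i)"
    using \<open>distinct [p, q, r]\<close> by (simp add: add.assoc)
  also have "\<dots> = gamma E w ?T"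
    using PMAS_sum[OF x] V by simp
  finally show ?thesis .
qed

theorem mainTheorem3:
  fixes V :: "'a set" and E :: "'a set set" and w :: "'a set \<Rightarrow> real"
    and v1 v2 v3 v4 :: 'a
  assumes G: "simple_graph V E"
    and wpos: "\<forall>e\<in>E. w e > 0"
    and verts: "v1 \<in> V" "v2 \<in> V" "v3 \<in> V" "v4 \<in> V"
    and dist: "distinct [v1, v2, v3, v4]"
    and e12: "{v1, v2} \<in> E" and e23: "{v2, v3} \<in> E" and n13: "{v1, v3} \<notin> E"
    and e24: "{v2, v4} \<in> E" and e34: "{v3, v4} \<in> E"
    and w_ge: "w {v2, v3} \<ge> w {v2, v4}"
    and PM: "population_monotonic V E w"
  shows "w {v2, v3} \<ge> w {v1, v2} + w {v3, v4} \<and> w {v2, v3} \<ge> w {v2, v4} + w {v3, v4}"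
proof -
  obtain x where x: "is_PMAS V E w x"
    using PM unfolding population_monotonic_def by blast
  have pos: "w {v1, v2} > 0" "w {v2, v3} > 0" "w {v3, v4} > 0" "w {v2, v4} > 0"
    using wpos e12 e23 e24 e34 by auto
  have split23: "x {v2, v3} v2 + x {v2, v3} v3 = w {v2, v3}"
    and nonneg: "0 \<le> x {v2, v3} v2" "0 \<le> x {v2, v3} v3"
    using PMAS_edge[OF G x, of v2 v3] PMAS_nonneg[OF G x, of "{v2, v3}"] verts dist e23 pos
    by auto
  have "gamma E w {v1, v2, v3} \<le> max (w {v1, v2}) (w {v2, v3})"
    using n13 pos by (intro gamma_triple_le[OF G]) auto
  moreover have "gamma E w {v2, v3, v4} \<le> max (w {v2, v3}) (w {v3, v4})"
    using w_ge pos by (intro gamma_triple_le[OF G]) auto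
  moreover have "w {v1, v2} + x {v2, v3} v3 \<le> gamma E w {v1, v2, v3}"
    using PMAS_path_le_gamma[OF G x, of v1 v2 v3] verts dist e12 pos by auto
  moreover have "w {v3, v4} + x {v2, v3} v2 \<le> gamma E w {v2, v3, v4}"
    using PMAS_path_le_gamma[OF G x, of v4 v3 v2] verts dist e34 pos
    by (auto simp: insert_commute)
  moreover have "w {v2, v4} + x {v2, v3} v3 \<le> gamma E w {v2, v3, v4}"
    using PMAS_path_le_gamma[OF G x, of v4 v2 v3] verts dist e24 pos
    by (auto simp: insert_commute)
  ultimately show ?thesis
    using split23 nonneg pos by (simp add: max_def split: if_splits)
qed

end
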